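(* Let $T,L$ be positive integers and $\epsilon\in(0,1)$. For $\rho=\{\rho_t^l\}\in[0,1]^{T\times L}$ let $F(\rho)=\sum_{t,l}\rho_t^l r_t^l b_t^l(\rho_t^l)$, $G(\rho)=1-\prod_{t=1}^T\prod_{l=1}^L\rho_t^l$, $H(\rho)=\sum_{t,l}(1-\rho_t^l)$. Let $\rho^\ast$ be an optimal solution of PA1: $\min F(\rho)$ s.t. $G(\rho)\le\epsilon$, $\rho\in[0,1]^{T\times L}$. Let $\tilde\lambda,\tilde\rho$ be optimal solutions of $\max_{\lambda\ge0}\min_{\rho\in[0,1]^{T\times L}}\{F(\rho)+\lambda[H(\rho)-\epsilon]\}$. Then $$0\le F(\tilde\rho)-F(\rho^\ast)\le\tilde\lambda\,\frac{TL(TL-1)}{2}\epsilon^2.$$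
   Context: For each $t\in\{1,\dots,T\}$, $l\in\{1,\dots,L\}$: $r_t^l$ is a positive integer and $b_t^l:[0,1]\to[0,b^l_{\max}]$ is strictly increasing and convex. $\rho_t^l$ is the probability of the event of successfully recruiting $r_t^l$ participants at time $t$, location $l$, and these events are independent. PA2 denotes the problem $\min F(\rho)$ s.t. $H(\rho)\le\epsilon$, $\rho\in[0,1]^{T\times L}$, so $F(\tilde\rho)$ is the optimal value of PA2 and $F(\rho^\ast)$ that of PA1. *)

theory Defs
  imports "HOL-Analysis.Analysis"
begin

text \<open>Decision variables rho t l for t in {1..T}, l in {1..L}, represented as functions
  nat => nat => real; only the values on the index box matter.\<close>

definition Box :: "nat \<Rightarrow> nat \<Rightarrow> (nat \<Rightarrow> nat \<Rightarrow> real) set" where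
  "Box T L = {\<rho>. \<forall>t\<in>{1..T}. \<forall>l\<in>{1..L}. 0 \<le> \<rho> t l \<and> \<rho> t l \<le> 1}"

definition Fobj :: "nat \<Rightarrow> nat \<Rightarrow> (nat \<Rightarrow> nat \<Rightarrow> nat) \<Rightarrow> (nat \<Rightarrow> nat \<Rightarrow> real \<Rightarrow> real)
    \<Rightarrow> (nat \<Rightarrow> nat \<Rightarrow> real) \<Rightarrow> real" where
  "Fobj T L r b \<rho> = (\<Sum>t\<in>{1..T}. \<Sum>l\<in>{1..L}. \<rho> t l * real (r t l) * b t l (\<rho> t l))"

definition Gcon :: "nat \<Rightarrow> nat \<Rightarrow> (nat \<Rightarrow> nat \<Rightarrow> real) \<Rightarrow> real" where
  "Gcon T L \<rho> = 1 - (\<Prod>t\<in>{1..T}. \<Prod>l\<in>{1..L}. \<rho> t l)"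

definition Hcon :: "nat \<Rightarrow> nat \<Rightarrow> (nat \<Rightarrow> nat \<Rightarrow> real) \<Rightarrow> real" where
  "Hcon T L \<rho> = (\<Sum>t\<in>{1..T}. \<Sum>l\<in>{1..L}. 1 - \<rho> t l)"

definition Lag :: "nat \<Rightarrow> nat \<Rightarrow> (nat \<Rightarrow> nat \<Rightarrow> nat) \<Rightarrow> (nat \<Rightarrow> nat \<Rightarrow> real \<Rightarrow> real) \<Rightarrow> real
    \<Rightarrow> (nat \<Rightarrow> nat \<Rightarrow> real) \<Rightarrow> real \<Rightarrow> real" where
  "Lag T L r b eps \<rho> lam = Fobj T L r b \<rho> + lam * (Hcon T L \<rho> - eps)"

definition dualfun :: "nat \<Rightarrow> nat \<Rightarrow> (nat \<Rightarrow> nat \<Rightarrow> nat) \<Rightarrow> (nat \<Rightarrow> nat \<Rightarrow> real \<Rightarrow> real) \<Rightarrow> real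
    \<Rightarrow> real \<Rightarrow> real" where
  "dualfun T L r b eps lam = (INF \<rho>\<in>Box T L. Lag T L r b eps \<rho> lam)"

end

theory Submission
  imports Defs
begin

text \<open>Each summand \<open>\<rho> r b(\<rho>) - \<lambda> \<rho>\<close> of the Lagrangian is strictly convex, so the Lagrangian
  grows at least linearly as any coordinate moves away from its minimizer \<open>\<rho>\<^sup>~\<close>. If \<open>H(\<rho>\<^sup>~) > \<epsilon>\<close>, or
  \<open>H(\<rho>\<^sup>~) < \<epsilon>\<close> with \<open>\<lambda>\<^sup>~ > 0\<close>, a small move of \<open>\<lambda>\<close> would then raise the dual function, so
  \<open>H(\<rho>\<^sup>~) \<le> \<epsilon>\<close> with complementary slackness. The union bound \<open>G \<le> H\<close> makes \<open>\<rho>\<^sup>~\<close>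
  feasible for PA1, giving the lower bound. For the upper bound,
  \<open>F(\<rho>\<^sup>~) = L(\<rho>\<^sup>~, \<lambda>\<^sup>~) \<le> L(\<rho>\<^sup>*, \<lambda>\<^sup>~) = F(\<rho>\<^sup>*) + \<lambda>\<^sup>~ (H(\<rho>\<^sup>*) - \<epsilon>)\<close>, and since
  \<open>G(\<rho>\<^sup>*) \<le> \<epsilon>\<close> forces every \<open>1 - \<rho>\<^sup>* \<le> \<epsilon>\<close>, the second Bonferroni inequality gives
  \<open>H(\<rho>\<^sup>*) - \<epsilon> \<le> TL(TL-1)/2 \<epsilon>\<^sup>2\<close>.\<close>

definition strict_convex_on :: "real set \<Rightarrow> (real \<Rightarrow> real) \<Rightarrow> bool" where
  "strict_convex_on S f \<longleftrightarrow> (\<forall>x\<in>S. \<forall>y\<in>S. x \<noteq> y \<longrightarrow>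
     (\<forall>t\<in>{0<..<1}. f ((1 - t) * x + t * y) < (1 - t) * f x + t * f y))"

lemma strict_convex_onD:
  assumes "strict_convex_on S f" "x \<in> S" "y \<in> S" "x \<noteq> y" "0 < t" "t < 1"
  shows "f ((1 - t) * x + t * y) < (1 - t) * f x + t * f y"
  using assms unfolding strict_convex_on_def by auto

text \<open>With \<open>m = (1 - t) a + t c\<close>, the convexity defect of \<open>x b(x)\<close> is at least
  \<open>t (1 - t) (a - c) (b a - b c)\<close>, which is positive when \<open>b\<close> is strictly increasing.\<close>
lemma strict_convex_on_mult_increasing:
  fixes b :: "real \<Rightarrow> real"
  assumes cvx: "convex_on S b" and mono: "strict_mono_on S b" and nonneg: "S \<subseteq> {0..}"
  shows "strict_convex_on S (\<lambda>x. x * b x)"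
  unfolding strict_convex_on_def
proof (intro ballI impI)
  fix a c t assume a: "a \<in> S" and c: "c \<in> S" and ac: "a \<noteq> c" and t: "t \<in> {0<..<1::real}"
  define m where "m = (1 - t) * a + t * c"
  have "0 \<le> a" "0 \<le> c" "0 < t" "t < 1" using a c t nonneg by auto
  then have "0 \<le> m" unfolding m_def by simp
  moreover have "b m \<le> (1 - t) * b a + t * b c"
    using convex_onD[OF cvx, of t a c] a c t by (simp add: m_def)
  ultimately have bm: "m * b m \<le> m * ((1 - t) * b a + t * b c)"
    by (rule mult_left_mono[rotated])
  have "(a - c) * (b a - b c) > 0"
    using ac a c mono by (cases "a < c") (auto simp: strict_mono_on_def mult_neg_neg)
  with \<open>0 < t\<close> \<open>t < 1\<close> have "0 < t * (1 - t) * ((a - c) * (b a - b c))" by simp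
  also have "\<dots> = (1 - t) * (a * b a) + t * (c * b c) - m * ((1 - t) * b a + t * b c)"
    unfolding m_def by (simp add: algebra_simps)
  finally show "m * b m < (1 - t) * (a * b a) + t * (c * b c)"
    using bm by linarith
qed

lemma strict_convex_on_cmult_diff_linear:
  assumes "strict_convex_on S f" "c > 0"
  shows "strict_convex_on S (\<lambda>x. c * f x - k * x)"
  unfolding strict_convex_on_def
proof (intro ballI impI)
  fix x y t assume "x \<in> S" "y \<in> S" "x \<noteq> y" "t \<in> {0<..<1::real}"
  then have "c * f ((1 - t) * x + t * y) < c * ((1 - t) * f x + t * f y)"
    using assms strict_convex_onD[of S f x y t] by simp
  then show "c * f ((1 - t) * x + t * y) - k * ((1 - t) * x + t * y)
      < (1 - t) * (c * f x - k * x) + t * (c * f y - k * y)"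
    by (simp add: algebra_simps)
qed

lemma strict_convex_on_reflect:
  assumes "strict_convex_on S f"
  shows "strict_convex_on (uminus ` S) (\<lambda>x. f (- x))"
  unfolding strict_convex_on_def
proof (intro ballI impI)
  fix x y t assume "x \<in> uminus ` S" "y \<in> uminus ` S" "x \<noteq> y" "t \<in> {0<..<1::real}"
  then have "f ((1 - t) * - x + t * - y) < (1 - t) * f (- x) + t * f (- y)"
    using assms strict_convex_onD[of S f "- x" "- y" t] by auto
  then show "f (- ((1 - t) * x + t * y)) < (1 - t) * f (- x) + t * f (- y)"
    by (simp add: algebra_simps)
qed

lemma strict_convex_on_min_less:
  assumes "convex S" "strict_convex_on S f" "x0 \<in> S" "\<forall>x\<in>S. f x0 \<le> f x" "u \<in> S" "u \<noteq> x0"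
  shows "f x0 < f u"
proof -
  have "(1 - 1/2) * x0 + 1/2 * u \<in> S"
    using convexD[OF assms(1,3,5), of "1 - 1/2" "1/2"] by simp
  then have "f x0 \<le> f ((1 - 1/2) * x0 + 1/2 * u)" using assms(4) by blast
  also have "\<dots> < (1 - 1/2) * f x0 + 1/2 * f u"
    using strict_convex_onD[OF assms(2,3,5) assms(6)[symmetric], of "1/2"] by simp
  finally show ?thesis by simp
qed

text \<open>The slope of \<open>f\<close> from \<open>x0\<close> to \<open>x0 + h\<close> is positive because \<open>x0\<close> is a strict minimum,
  and slopes from \<open>x0\<close> increase.\<close>
lemma strict_convex_on_growth_right:
  assumes S: "convex S" and f: "strict_convex_on S f" and x0: "x0 \<in> S"
    and min: "\<forall>x\<in>S. f x0 \<le> f x" and h: "h > 0"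
  shows "\<exists>D>0. \<forall>x\<in>S. x0 + h < x \<longrightarrow> D * (x - x0) \<le> f x - f x0"
proof -
  have step: "(1 - h / (x - x0)) * x0 + h / (x - x0) * x = x0 + h"
    "0 < h / (x - x0)" "h / (x - x0) < 1" if "x0 + h < x" for x
  proof -
    have "(1 - q) * x0 + q * x = x0 + q * (x - x0)" for q :: real
      by (simp add: algebra_simps)
    from this[of "h / (x - x0)"] that h show "(1 - h / (x - x0)) * x0 + h / (x - x0) * x = x0 + h"
      by simp
    show "0 < h / (x - x0)" "h / (x - x0) < 1" using that h by auto
  qed
  show ?thesis
  proof (cases "x0 + h \<in> S")
    case False
    have "x \<notin> S" if "x0 + h < x" for x
      using convexD[OF S x0, of x "1 - h / (x - x0)" "h / (x - x0)"] step[OF that] False by auto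
    then show ?thesis by (intro exI[of _ 1]) auto
  next
    case True
    define c where "c = f (x0 + h) - f x0"
    have c: "c > 0" unfolding c_def using strict_convex_on_min_less[OF S f x0 min True] h by simp
    show ?thesis
    proof (intro exI[of _ "c / h"] conjI ballI impI)
      fix x assume x: "x \<in> S" and far: "x0 + h < x"
      define t where "t = h / (x - x0)"
      have "f (x0 + h) < (1 - t) * f x0 + t * f x"
        using strict_convex_onD[OF f x0 x, of t] step[OF far] far h unfolding t_def by auto
      then have "c < t * (f x - f x0)" unfolding c_def by (simp add: algebra_simps)
      then have "c * (x - x0) < h * (f x - f x0)" unfolding t_def using far h by (simp add: field_simps)
      then show "c / h * (x - x0) \<le> f x - f x0" using h by (simp add: field_simps)
    qed (use c h in simp)
  qed
qed

lemma strict_convex_on_growth: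
  assumes S: "convex S" and f: "strict_convex_on S f" and x0: "x0 \<in> S"
    and min: "\<forall>x\<in>S. f x0 \<le> f x" and h: "h > 0"
  shows "\<exists>D>0. \<forall>x\<in>S. h < \<bar>x - x0\<bar> \<longrightarrow> D * \<bar>x - x0\<bar> \<le> f x - f x0"
proof -
  obtain D1 where D1: "D1 > 0" "\<forall>x\<in>S. x0 + h < x \<longrightarrow> D1 * (x - x0) \<le> f x - f x0"
    using strict_convex_on_growth_right[OF S f x0 min h] by blast
  have "- x0 \<in> uminus ` S" "\<forall>y\<in>uminus ` S. f (- (- x0)) \<le> f (- y)" using x0 min by auto
  then obtain D2 where D2: "D2 > 0"
      "\<forall>y\<in>uminus ` S. - x0 + h < y \<longrightarrow> D2 * (y - (- x0)) \<le> f (- y) - f (- (- x0))"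
    using strict_convex_on_growth_right[OF convex_negations[OF S] strict_convex_on_reflect[OF f] _ _ h]
    by blast
  show ?thesis
  proof (intro exI[of _ "min D1 D2"] conjI ballI impI)
    fix x assume x: "x \<in> S" and far: "h < \<bar>x - x0\<bar>"
    show "min D1 D2 * \<bar>x - x0\<bar> \<le> f x - f x0"
    proof (cases "x0 < x")
      case True
      then have "min D1 D2 * \<bar>x - x0\<bar> \<le> D1 * (x - x0)" by (simp add: mult_right_mono)
      moreover have "D1 * (x - x0) \<le> f x - f x0" using D1(2) x far True by auto
      ultimately show ?thesis by linarith
    next
      case False
      then have "min D1 D2 * \<bar>x - x0\<bar> \<le> D2 * (- x - (- x0))" by (simp add: mult_right_mono)
      moreover have "D2 * (- x - (- x0)) \<le> f x - f x0" using D2(2) x far False by auto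
      ultimately show ?thesis by linarith
    qed
  qed (use D1 D2 in simp)
qed

lemma sum_min_imp_component_min:
  fixes \<phi> :: "'i \<Rightarrow> real \<Rightarrow> real"
  assumes I: "finite I" and i: "i \<in> I" and z: "\<forall>j\<in>I. z j \<in> S" and x: "x \<in> S"
    and min: "\<forall>y. (\<forall>j\<in>I. y j \<in> S) \<longrightarrow> (\<Sum>j\<in>I. \<phi> j (z j)) \<le> (\<Sum>j\<in>I. \<phi> j (y j))"
  shows "\<phi> i (z i) \<le> \<phi> i x"
proof -
  have "(\<Sum>j\<in>I. \<phi> j (z j)) \<le> (\<Sum>j\<in>I. \<phi> j ((z(i := x)) j))"
    using min z x by auto
  moreover have "(\<Sum>j\<in>I. \<phi> j ((z(i := x)) j)) = \<phi> i x + (\<Sum>j\<in>I - {i}. \<phi> j (z j))"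
    using I i by (simp add: sum.remove)
  moreover have "(\<Sum>j\<in>I. \<phi> j (z j)) = \<phi> i (z i) + (\<Sum>j\<in>I - {i}. \<phi> j (z j))"
    using I i by (simp add: sum.remove)
  ultimately show ?thesis by simp
qed

text \<open>The slack \<open>\<eta>\<close> is split evenly among the coordinates, \<open>h = \<eta> / card I\<close>.\<close>
lemma separable_min_sharp:
  fixes \<phi> :: "'i \<Rightarrow> real \<Rightarrow> real" and z :: "'i \<Rightarrow> real"
  assumes I: "finite I" and S: "convex S"
    and cvx: "\<forall>i\<in>I. strict_convex_on S (\<phi> i)"
    and z: "\<forall>i\<in>I. z i \<in> S" and min: "\<forall>i\<in>I. \<forall>x\<in>S. \<phi> i (z i) \<le> \<phi> i x"
    and eta: "\<eta> > 0"
  shows "\<exists>\<delta>>0. \<forall>d\<in>{0<..\<delta>}. \<forall>y. (\<forall>i\<in>I. y i \<in> S) \<longrightarrow>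
      d * \<bar>(\<Sum>i\<in>I. y i) - (\<Sum>i\<in>I. z i)\<bar> - d * \<eta> \<le> (\<Sum>i\<in>I. \<phi> i (y i) - \<phi> i (z i))"
proof (cases "I = {}")
  case True
  then show ?thesis using eta by (intro exI[of _ 1]) auto
next
  case False
  define h where "h = \<eta> / card I"
  have h: "h > 0" unfolding h_def using eta I False by (simp add: card_gt_0_iff)
  have "\<forall>i\<in>I. \<exists>D>0. \<forall>x\<in>S. h < \<bar>x - z i\<bar> \<longrightarrow> D * \<bar>x - z i\<bar> \<le> \<phi> i x - \<phi> i (z i)"
    using strict_convex_on_growth[OF S _ _ _ h] cvx z min by blast
  then obtain D where D: "\<forall>i\<in>I. D i > 0 \<and>
      (\<forall>x\<in>S. h < \<bar>x - z i\<bar> \<longrightarrow> D i * \<bar>x - z i\<bar> \<le> \<phi> i x - \<phi> i (z i))"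
    by metis
  define \<delta> where "\<delta> = Min (D ` I)"
  have \<delta>: "\<delta> > 0" unfolding \<delta>_def using I False D by (simp add: Min_gr_iff)
  have \<delta>_le: "\<delta> \<le> D i" if "i \<in> I" for i unfolding \<delta>_def using I that by simp
  show ?thesis
  proof (intro exI[of _ \<delta>] conjI ballI allI impI)
    fix d y assume d: "d \<in> {0<..\<delta>}" and y: "\<forall>i\<in>I. y i \<in> S"
    have coordinatewise: "d * \<bar>y i - z i\<bar> - d * h \<le> \<phi> i (y i) - \<phi> i (z i)" if i: "i \<in> I" for i
    proof (cases "h < \<bar>y i - z i\<bar>")
      case True
      have "d * \<bar>y i - z i\<bar> \<le> D i * \<bar>y i - z i\<bar>"
        using d \<delta>_le[OF i] by (intro mult_right_mono) auto
      also have "\<dots> \<le> \<phi> i (y i) - \<phi> i (z i)" using D i y True by blast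
      finally have "d * \<bar>y i - z i\<bar> \<le> \<phi> i (y i) - \<phi> i (z i)" .
      moreover have "0 \<le> d * h" using d h by simp
      ultimately show ?thesis by linarith
    next
      case False
      then have "d * \<bar>y i - z i\<bar> \<le> d * h" using d by (intro mult_left_mono) auto
      moreover have "\<phi> i (z i) \<le> \<phi> i (y i)" using min i y by blast
      ultimately show ?thesis by linarith
    qed
    have "d * \<bar>(\<Sum>i\<in>I. y i) - (\<Sum>i\<in>I. z i)\<bar> \<le> (\<Sum>i\<in>I. d * \<bar>y i - z i\<bar>)"
      using d by (simp add: sum_subtractf[symmetric] sum_distrib_left[symmetric] mult_left_mono)
    moreover have "(\<Sum>i\<in>I. d * \<bar>y i - z i\<bar> - d * h) = (\<Sum>i\<in>I. d * \<bar>y i - z i\<bar>) - d * \<eta>"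
      unfolding h_def using I False by (simp add: sum_subtractf)
    moreover have "(\<Sum>i\<in>I. d * \<bar>y i - z i\<bar> - d * h) \<le> (\<Sum>i\<in>I. \<phi> i (y i) - \<phi> i (z i))"
      using coordinatewise by (rule sum_mono)
    ultimately show "d * \<bar>(\<Sum>i\<in>I. y i) - (\<Sum>i\<in>I. z i)\<bar> - d * \<eta>
        \<le> (\<Sum>i\<in>I. \<phi> i (y i) - \<phi> i (z i))"
      by linarith
  qed (use \<delta> in simp)
qed

text \<open>A violated constraint, or a slack one with \<open>lam > 0\<close>, would let a small step of \<open>lam\<close>
  towards \<open>sgn (g x)\<close> increase the dual function.\<close>
lemma dual_optimal_complementary_slackness:
  fixes K :: "'a set" and f g :: "'a \<Rightarrow> real"
  defines "dual \<mu> \<equiv> INF y\<in>K. f y + \<mu> * g y"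
  assumes x: "x \<in> K" and x_min: "\<forall>y\<in>K. f x + lam * g x \<le> f y + lam * g y"
    and lam: "lam \<ge> 0" and lam_max: "\<forall>\<mu>\<ge>0. dual \<mu> \<le> dual lam"
    and sharp: "\<forall>\<eta>>0. \<exists>\<delta>>0. \<forall>d\<in>{0<..\<delta>}. \<forall>y\<in>K.
      d * \<bar>g y - g x\<bar> - d * \<eta> \<le> (f y + lam * g y) - (f x + lam * g x)"
  shows "g x \<le> 0 \<and> lam * g x = 0"
proof (rule ccontr)
  assume "\<not> (g x \<le> 0 \<and> lam * g x = 0)"
  then have violated: "g x > 0 \<or> (lam > 0 \<and> g x < 0)" using lam by auto
  then have "\<bar>g x\<bar> / 2 > 0" by auto
  then obtain \<delta> where \<delta>: "\<delta> > 0" and sharp\<delta>: "\<forall>d\<in>{0<..\<delta>}. \<forall>y\<in>K.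
      d * \<bar>g y - g x\<bar> - d * (\<bar>g x\<bar> / 2) \<le> (f y + lam * g y) - (f x + lam * g x)"
    using sharp by blast
  define d where "d = (if g x > 0 then \<delta> else min \<delta> lam)"
  define \<mu> where "\<mu> = sgn (g x) * d"
  have d: "d \<in> {0<..\<delta>}" unfolding d_def using \<delta> violated by auto
  have \<mu>: "lam + \<mu> \<ge> 0" "\<mu> * g x = d * \<bar>g x\<bar>"
    using lam d violated unfolding \<mu>_def d_def by (auto simp: abs_if)
  have "f x + lam * g x + d * \<bar>g x\<bar> / 2 \<le> f y + (lam + \<mu>) * g y" if y: "y \<in> K" for y
  proof -
    have "\<bar>\<mu>\<bar> = d" unfolding \<mu>_def using d violated by (auto simp: abs_mult)
    then have "- d * \<bar>g y - g x\<bar> \<le> \<mu> * (g y - g x)"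
      using abs_ge_minus_self[of "\<mu> * (g y - g x)"] by (simp add: abs_mult)
    then show ?thesis using sharp\<delta> d y \<mu>(2) by (fastforce simp: algebra_simps)
  qed
  then have "f x + lam * g x + d * \<bar>g x\<bar> / 2 \<le> dual (lam + \<mu>)"
    unfolding dual_def using x by (intro cINF_greatest) auto
  also have "\<dots> \<le> dual lam" using lam_max \<mu>(1) by blast
  also have "\<dots> \<le> f x + lam * g x"
    unfolding dual_def using x x_min by (intro cINF_lower bdd_belowI2) auto
  moreover have "0 < d * \<bar>g x\<bar>" using d violated by (intro mult_pos_pos) auto
  ultimately show False by linarith
qed

lemma one_minus_prod_le_sum:
  fixes q :: "'i \<Rightarrow> real"
  assumes "finite S" "\<forall>i\<in>S. 0 \<le> q i \<and> q i \<le> 1"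
  shows "1 - (\<Prod>i\<in>S. 1 - q i) \<le> (\<Sum>i\<in>S. q i)"
  using assms
proof (induction S rule: finite_induct)
  case (insert a F)
  have "(1 - q a) * (\<Prod>i\<in>F. 1 - q i) \<ge> (1 - q a) * (1 - (\<Sum>i\<in>F. q i))"
    using insert by (intro mult_left_mono) auto
  moreover have "q a * (\<Sum>i\<in>F. q i) \<ge> 0" using insert.prems by (simp add: sum_nonneg)
  ultimately show ?case using insert by (simp add: algebra_simps)
qed simp

text \<open>The second Bonferroni inequality, each of the \<open>card S choose 2\<close> pairwise products being at
  most \<open>M\<^sup>2\<close>.\<close>
lemma sum_le_one_minus_prod_add:
  fixes q :: "'i \<Rightarrow> real"
  assumes "finite S" "\<forall>i\<in>S. 0 \<le> q i \<and> q i \<le> M \<and> q i \<le> 1"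
  shows "(\<Sum>i\<in>S. q i) \<le> 1 - (\<Prod>i\<in>S. 1 - q i) + real (card S) * (real (card S) - 1) / 2 * M\<^sup>2"
  using assms
proof (induction S rule: finite_induct)
  case (insert a F)
  define P where "P = (\<Prod>i\<in>F. 1 - q i)"
  define k where "k = real (card F)"
  have IH: "(\<Sum>i\<in>F. q i) \<le> 1 - P + k * (k - 1) / 2 * M\<^sup>2"
    using insert unfolding P_def k_def by auto
  have qa: "0 \<le> q a" "q a \<le> M" using insert.prems by auto
  have "P \<le> 1" unfolding P_def using insert.prems by (intro prod_le_1) auto
  have "1 - P \<le> k * M"
    using one_minus_prod_le_sum[of F q] sum_bounded_above[of F q M] insert unfolding P_def k_def
    by fastforce
  have "q a * (1 - P) \<le> M * (k * M)"
    using qa \<open>P \<le> 1\<close> \<open>1 - P \<le> k * M\<close> by (intro mult_mono) auto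
  have "(\<Sum>i\<in>insert a F. q i) \<le> 1 - (1 - q a) * P + q a * (1 - P) + k * (k - 1) / 2 * M\<^sup>2"
    using IH insert by (simp add: algebra_simps)
  also have "\<dots> \<le> 1 - (1 - q a) * P + (k + 1) * (k + 1 - 1) / 2 * M\<^sup>2"
    using \<open>q a * (1 - P) \<le> M * (k * M)\<close> unfolding power2_eq_square by (simp add: field_simps)
  finally show ?case using insert unfolding P_def k_def by (simp add: add.commute)
qed simp

lemma Fobj_eq: "Fobj T L r b \<rho> = (\<Sum>(t, l)\<in>{1..T} \<times> {1..L}. \<rho> t l * real (r t l) * b t l (\<rho> t l))"
  unfolding Fobj_def sum.cartesian_product ..

lemma Hcon_eq: "Hcon T L \<rho> = real (T * L) - (\<Sum>(t, l)\<in>{1..T} \<times> {1..L}. \<rho> t l)"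
  unfolding Hcon_def sum.cartesian_product by (simp add: split_def sum_subtractf)

lemma Gcon_eq: "Gcon T L \<rho> = 1 - (\<Prod>(t, l)\<in>{1..T} \<times> {1..L}. \<rho> t l)"
  unfolding Gcon_def prod.cartesian_product ..

lemma Box_eq: "\<rho> \<in> Box T L \<longleftrightarrow> (\<forall>(t, l)\<in>{1..T} \<times> {1..L}. \<rho> t l \<in> {0..1})"
  unfolding Box_def by auto

lemma Gcon_le_Hcon:
  assumes "\<rho> \<in> Box T L"
  shows "Gcon T L \<rho> \<le> Hcon T L \<rho>"
  using one_minus_prod_le_sum[of "{1..T} \<times> {1..L}" "\<lambda>(t, l). 1 - \<rho> t l"] assms
  unfolding Gcon_def Hcon_def Box_eq prod.cartesian_product sum.cartesian_product
  by (auto simp: split_def)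

text \<open>Each factor dominates the product, so \<open>G \<rho> \<le> \<epsilon>\<close> forces every \<open>1 - \<rho> t l \<le> \<epsilon>\<close>; the
  second Bonferroni inequality then bounds \<open>H\<close> by \<open>G\<close>.\<close>
lemma Hcon_le_of_Gcon_le:
  assumes box: "\<rho> \<in> Box T L" and G: "Gcon T L \<rho> \<le> eps"
  shows "Hcon T L \<rho> \<le> eps + real (T * L) * (real (T * L) - 1) / 2 * eps\<^sup>2"
proof -
  define I where "I = {1..T} \<times> {1..L}"
  have I: "finite I" "card I = T * L" unfolding I_def by auto
  have unit: "\<forall>p\<in>I. case_prod \<rho> p \<in> {0..1}" using box unfolding Box_eq I_def by auto
  have "1 - case_prod \<rho> p \<le> eps" if p: "p \<in> I" for p
  proof -
    have "(\<Prod>q\<in>I. case_prod \<rho> q) = case_prod \<rho> p * (\<Prod>q\<in>I - {p}. case_prod \<rho> q)"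
      using I p by (simp add: prod.remove)
    also have "\<dots> \<le> case_prod \<rho> p"
      using unit p by (intro mult_left_le prod_le_1) auto
    finally show ?thesis using G unfolding Gcon_eq I_def by simp
  qed
  then have "(\<Sum>p\<in>I. 1 - case_prod \<rho> p)
      \<le> 1 - (\<Prod>p\<in>I. 1 - (1 - case_prod \<rho> p)) + real (card I) * (real (card I) - 1) / 2 * eps\<^sup>2"
    using unit by (intro sum_le_one_minus_prod_add[OF I(1)]) auto
  then show ?thesis
    using G unfolding Hcon_def Gcon_eq I_def sum.cartesian_product I(2)[unfolded I_def]
    by (simp add: split_def)
qed

definition lag_term :: "(nat \<Rightarrow> nat \<Rightarrow> nat) \<Rightarrow> (nat \<Rightarrow> nat \<Rightarrow> real \<Rightarrow> real) \<Rightarrow> real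
    \<Rightarrow> nat \<times> nat \<Rightarrow> real \<Rightarrow> real" where
  "lag_term r b lam = (\<lambda>(t, l) x. real (r t l) * (x * b t l x) - lam * x)"

lemma Lag_eq_sum_lag_term:
  "Lag T L r b eps \<rho> lam
     = (\<Sum>p\<in>{1..T} \<times> {1..L}. lag_term r b lam p (case_prod \<rho> p)) + lam * (real (T * L) - eps)"
  unfolding Lag_def Fobj_eq Hcon_eq lag_term_def
  by (simp add: split_def sum_subtractf sum_distrib_left algebra_simps)

lemma strict_convex_on_lag_term:
  assumes "r t l > 0" "strict_mono_on {0..1} (b t l)" "convex_on {0..1} (b t l)"
  shows "strict_convex_on {0..1} (lag_term r b lam (t, l))"
  unfolding lag_term_def using assms
  by (simp add: strict_convex_on_cmult_diff_linear strict_convex_on_mult_increasing)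

lemma PA2_complementary_slackness:
  fixes r :: "nat \<Rightarrow> nat \<Rightarrow> nat" and b :: "nat \<Rightarrow> nat \<Rightarrow> real \<Rightarrow> real"
  assumes r_pos: "\<forall>t\<in>{1..T}. \<forall>l\<in>{1..L}. r t l > 0"
    and b_mono: "\<forall>t\<in>{1..T}. \<forall>l\<in>{1..L}. strict_mono_on {0..1} (b t l)"
    and b_convex: "\<forall>t\<in>{1..T}. \<forall>l\<in>{1..L}. convex_on {0..1} (b t l)"
    and lam_nonneg: "lamt \<ge> 0"
    and rho_t_box: "\<rho>t \<in> Box T L"
    and rho_t_min: "\<forall>\<rho>\<in>Box T L. Lag T L r b eps \<rho>t lamt \<le> Lag T L r b eps \<rho> lamt"
    and lam_max: "\<forall>lam\<ge>0. dualfun T L r b eps lam \<le> dualfun T L r b eps lamt"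
  shows "Hcon T L \<rho>t \<le> eps \<and> lamt * (Hcon T L \<rho>t - eps) = 0"
proof -
  define I where "I = {1..T} \<times> {1..L}"
  define \<psi> where "\<psi> = lag_term r b lamt"
  have I: "finite I" unfolding I_def by simp
  have Lag_sep: "Lag T L r b eps \<rho> lamt = (\<Sum>p\<in>I. \<psi> p (case_prod \<rho> p)) + lamt * (real (T * L) - eps)"
    for \<rho>
    unfolding Lag_eq_sum_lag_term \<psi>_def I_def ..
  have Box_I: "\<rho> \<in> Box T L \<longleftrightarrow> (\<forall>p\<in>I. case_prod \<rho> p \<in> {0..1})" for \<rho>
    unfolding Box_eq I_def by auto
  have z: "\<forall>p\<in>I. case_prod \<rho>t p \<in> {0..1}" using rho_t_box Box_I by blast
  have "(\<Sum>p\<in>I. \<psi> p (case_prod \<rho>t p)) \<le> (\<Sum>p\<in>I. \<psi> p (y p))" if "\<forall>p\<in>I. y p \<in> {0..1}" for y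
  proof -
    have "curry y \<in> Box T L" using Box_I[of "curry y"] that by simp
    then show ?thesis using rho_t_min unfolding Lag_sep by (auto simp: case_prod_curry)
  qed
  then have coordinate_min: "\<forall>p\<in>I. \<forall>x\<in>{0..1}. \<psi> p (case_prod \<rho>t p) \<le> \<psi> p x"
    using sum_min_imp_component_min[OF I _ z] by blast
  have strictly_convex: "\<forall>p\<in>I. strict_convex_on {0..1} (\<psi> p)"
    unfolding \<psi>_def using r_pos b_mono b_convex unfolding I_def
    by (auto intro: strict_convex_on_lag_term)
  have sharp: "\<exists>\<delta>>0. \<forall>d\<in>{0<..\<delta>}. \<forall>\<rho>\<in>Box T L.
      d * \<bar>(\<Sum>p\<in>I. case_prod \<rho> p) - (\<Sum>p\<in>I. case_prod \<rho>t p)\<bar> - d * \<eta>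
        \<le> Lag T L r b eps \<rho> lamt - Lag T L r b eps \<rho>t lamt" if "\<eta> > 0" for \<eta>
  proof -
    obtain \<delta> where "\<delta> > 0" and \<delta>: "\<forall>d\<in>{0<..\<delta>}. \<forall>y. (\<forall>p\<in>I. y p \<in> {0..1}) \<longrightarrow>
        d * \<bar>(\<Sum>p\<in>I. y p) - (\<Sum>p\<in>I. case_prod \<rho>t p)\<bar> - d * \<eta>
          \<le> (\<Sum>p\<in>I. \<psi> p (y p) - \<psi> p (case_prod \<rho>t p))"
      using separable_min_sharp[OF I convex_real_interval(5) strictly_convex z coordinate_min \<open>\<eta> > 0\<close>]
      by blast
    show ?thesis
      using \<open>\<delta> > 0\<close> \<delta> Box_I unfolding Lag_sep by (auto simp: sum_subtractf)
  qed
  have "Hcon T L \<rho>t - eps \<le> 0 \<and> lamt * (Hcon T L \<rho>t - eps) = 0"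
  proof (rule dual_optimal_complementary_slackness[where K = "Box T L" and f = "Fobj T L r b"
        and g = "\<lambda>\<rho>. Hcon T L \<rho> - eps" and x = \<rho>t and lam = lamt])
    show "\<forall>\<mu>\<ge>0. (INF \<rho>\<in>Box T L. Fobj T L r b \<rho> + \<mu> * (Hcon T L \<rho> - eps))
        \<le> (INF \<rho>\<in>Box T L. Fobj T L r b \<rho> + lamt * (Hcon T L \<rho> - eps))"
      using lam_max unfolding dualfun_def Lag_def .
    show "\<forall>\<eta>>0. \<exists>\<delta>>0. \<forall>d\<in>{0<..\<delta>}. \<forall>\<rho>\<in>Box T L.
        d * \<bar>(Hcon T L \<rho> - eps) - (Hcon T L \<rho>t - eps)\<bar> - d * \<eta>
          \<le> (Fobj T L r b \<rho> + lamt * (Hcon T L \<rho> - eps)) - (Fobj T L r b \<rho>t + lamt * (Hcon T L \<rho>t - eps))"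
      using sharp unfolding Lag_def Hcon_eq I_def by (simp add: abs_minus_commute split_def)
  qed (use rho_t_box rho_t_min lam_nonneg in \<open>auto simp: Lag_def\<close>)
  then show ?thesis by simp
qed

theorem theorem1:
  fixes T L :: nat and eps :: real
    and r :: "nat \<Rightarrow> nat \<Rightarrow> nat" and b :: "nat \<Rightarrow> nat \<Rightarrow> real \<Rightarrow> real"
    and bmax :: "nat \<Rightarrow> real"
    and \<rho>star \<rho>t :: "nat \<Rightarrow> nat \<Rightarrow> real" and lamt :: real
  assumes T: "T \<ge> 1" and L: "L \<ge> 1"
    and eps_pos: "0 < eps" "eps < 1"
    and r_pos: "\<forall>t\<in>{1..T}. \<forall>l\<in>{1..L}. r t l > 0"
    and b_range: "\<forall>t\<in>{1..T}. \<forall>l\<in>{1..L}. \<forall>x\<in>{0..1}. 0 \<le> b t l x \<and> b t l x \<le> bmax l"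
    and b_mono: "\<forall>t\<in>{1..T}. \<forall>l\<in>{1..L}. strict_mono_on {0..1} (b t l)"
    and b_convex: "\<forall>t\<in>{1..T}. \<forall>l\<in>{1..L}. convex_on {0..1} (b t l)"
    and PA1_feas: "\<rho>star \<in> Box T L" "Gcon T L \<rho>star \<le> eps"
    and PA1_opt: "\<forall>\<rho>\<in>Box T L. Gcon T L \<rho> \<le> eps \<longrightarrow> Fobj T L r b \<rho>star \<le> Fobj T L r b \<rho>"
    and lam_nonneg: "lamt \<ge> 0"
    and rho_t_box: "\<rho>t \<in> Box T L"
    and rho_t_min: "\<forall>\<rho>\<in>Box T L. Lag T L r b eps \<rho>t lamt \<le> Lag T L r b eps \<rho> lamt"
    and lam_max: "\<forall>lam\<ge>0. dualfun T L r b eps lam \<le> dualfun T L r b eps lamt"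
  shows "0 \<le> Fobj T L r b \<rho>t - Fobj T L r b \<rho>star
       \<and> Fobj T L r b \<rho>t - Fobj T L r b \<rho>star
           \<le> lamt * (real (T * L) * (real (T * L) - 1) / 2) * eps\<^sup>2"
proof
  have slack: "Hcon T L \<rho>t \<le> eps" "lamt * (Hcon T L \<rho>t - eps) = 0"
    using PA2_complementary_slackness[OF r_pos b_mono b_convex lam_nonneg rho_t_box rho_t_min lam_max]
    by auto
  have "Gcon T L \<rho>t \<le> eps" using Gcon_le_Hcon[OF rho_t_box] slack(1) by linarith
  then show "0 \<le> Fobj T L r b \<rho>t - Fobj T L r b \<rho>star" using PA1_opt rho_t_box by auto
  have "Fobj T L r b \<rho>t = Lag T L r b eps \<rho>t lamt" using slack(2) unfolding Lag_def by simp
  also have "\<dots> \<le> Lag T L r b eps \<rho>star lamt" using rho_t_min PA1_feas(1) by blast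
  also have "\<dots> \<le> Fobj T L r b \<rho>star + lamt * (real (T * L) * (real (T * L) - 1) / 2 * eps\<^sup>2)"
    using Hcon_le_of_Gcon_le[OF PA1_feas] lam_nonneg unfolding Lag_def
    by (intro add_left_mono mult_left_mono) auto
  finally show "Fobj T L r b \<rho>t - Fobj T L r b \<rho>star
      \<le> lamt * (real (T * L) * (real (T * L) - 1) / 2) * eps\<^sup>2"
    by (simp only: mult.assoc)
qed

end
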